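(* Let $m\ge2$ and $f_1,\dots,f_m:X\to\mathbb R_{+\infty}$ with $\bigcap_{i=1}^m\operatorname{dom} f_i\ne\emptyset$. Consider: (i) there is $K>1$ such that $\partial_\varepsilon(\sum_i f_i)(x)\subset\sum_{i=1}^m\partial_{K\varepsilon}f_i(x)$ for all $x\in\bigcap_i\operatorname{dom} f_i$ and $\varepsilon>0$; (ii) there is $K>0$ such that $\operatorname{cl}\big(\sum_{i=1}^m\partial_\varepsilon f_i(x)\big)\subset\sum_{i=1}^m\partial_{K\varepsilon}f_i(x)$ for all $x\in\bigcap_i\operatorname{dom} f_i$ and $\varepsilon>0$; (iii) for all $x\in X$ and $\varepsilon\ge0$, $\partial_\varepsilon(\sum_i f_i)(x)=\bigcap_{\eta>0}\bigcup_{\varepsilon_i\ge0,\ \sum_i\varepsilon_i=\varepsilon+\eta}\sum_{i=1}^m\partial_{\varepsilon_i}f_i(x)$; (iv) $(\sum_{i=1}^m f_i)^*=f_1^*\square\cdots\square f_m^*$; (v) $f_1^*\square\cdots\square f_m^*$ is lower semicontinuous on $\mathcal L$. Then (i)$\Leftrightarrow$(iii)$\Leftrightarrow$(iv)$\Rightarrow$(v)$\Rightarrow$(ii). If moreover, for all $x\in\bigcap_i\operatorname{dom} f_i$ and $\varepsilon\ge0$, $\partial_\varepsilon(\sum_i f_i)(x)=\bigcap_{\eta>0}\operatorname{cl}\big(\bigcup_{\varepsilon_i\ge0,\ \sum_i\varepsilon_i=\varepsilon+\eta}\sum_{i=1}^m\partial_{\varepsilon_i}f_i(x)\big)$ (which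 holds in particular if $\operatorname{cl}(\sum_i\operatorname{epi} f_i^* )=\operatorname{epi}(\sum_i f_i)^*$), then all five properties are equivalent.
   Context: $X$ is a nonempty set; $\mathbb R_{+\infty}=\mathbb R\cup\{+\infty\}$. $\mathcal L$ is a family of functions $X\to\mathbb R$ closed under pointwise addition and real scalar multiplication, equipped with the pointwise convergence topology (weakest topology making all evaluations $l\mapsto l(x)$ continuous); $\mathcal L\times\mathbb R$ has the product topology; $\operatorname{cl}$ denotes closure. For $f:X\to\mathbb R_{+\infty}$: $\operatorname{dom} f=\{x:f(x)<+\infty\}$; $f^*(l)=\sup_{x\in X}(l(x)-f(x))$; $\operatorname{epi} f^*=\{(l,r):f^*(l)\le r\}$. Infimal convolution: $(g_1\square\cdots\square g_m)(l)=\inf\{\sum_i g_i(l_i):l_i\in\mathcal L,\ \sum_i l_i=l\}$. For $\varepsilon\ge0$ and $x\in\operatorname{dom} f$, $\partial_\varepsilon f(x)=\{l\in\mathcal L: f(y)-f(x)-(l(y)-l(x))+\varepsilon\ge0\ \forall y\in X\}$, and $\emptyset$ if $x\notin\operatorname{dom} f$. Sums of sets are Minkowski sums. *)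

theory Defs
  imports "HOL-Analysis.Analysis" "HOL-Library.Function_Algebras"
begin

definition edom :: "('a \<Rightarrow> ereal) \<Rightarrow> 'a set" where
  "edom f = {x. f x < \<infinity>}"

definition fconj :: "('a \<Rightarrow> ereal) \<Rightarrow> ('a \<Rightarrow> real) \<Rightarrow> ereal" where
  "fconj f l = (SUP x. ereal (l x) - f x)"

definition epi :: "('a \<Rightarrow> real) set \<Rightarrow> (('a \<Rightarrow> real) \<Rightarrow> ereal) \<Rightarrow> (('a \<Rightarrow> real) \<times> real) set" where
  "epi L g = {(l, r). l \<in> L \<and> g l \<le> ereal r}"

definition msum :: "nat \<Rightarrow> (nat \<Rightarrow> 'b::comm_monoid_add set) \<Rightarrow> 'b set" where
  "msum m A = {s. \<exists>v. (\<forall>i\<in>{1..m}. v i \<in> A i) \<and> s = (\<Sum>i\<in>{1..m}. v i)}"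

definition infconv :: "('a \<Rightarrow> real) set \<Rightarrow> nat \<Rightarrow> (nat \<Rightarrow> ('a \<Rightarrow> real) \<Rightarrow> ereal) \<Rightarrow> ('a \<Rightarrow> real) \<Rightarrow> ereal" where
  "infconv L m g l = (INF v \<in> {v. (\<forall>i\<in>{1..m}. v i \<in> L) \<and> (\<Sum>i\<in>{1..m}. v i) = l}. \<Sum>i\<in>{1..m}. g i (v i))"

definition esubdiff :: "('a \<Rightarrow> real) set \<Rightarrow> ('a \<Rightarrow> ereal) \<Rightarrow> real \<Rightarrow> 'a \<Rightarrow> ('a \<Rightarrow> real) set" where
  "esubdiff L f \<epsilon> x = (if x \<in> edom f then
     {l \<in> L. \<forall>y. f y - f x - ereal (l y - l x) + ereal \<epsilon> \<ge> 0} else {})"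

text \<open>Lower semicontinuity on L (topology of pointwise convergence = subspace of the product
  topology on 'a \<Rightarrow> real): all sublevel sets are closed in L.\<close>
definition lsc_on :: "('a \<Rightarrow> real) set \<Rightarrow> (('a \<Rightarrow> real) \<Rightarrow> ereal) \<Rightarrow> bool" where
  "lsc_on L g \<longleftrightarrow> (\<forall>r::real. closedin (top_of_set L) {l \<in> L. g l \<le> ereal r})"

definition fsum :: "nat \<Rightarrow> (nat \<Rightarrow> 'a \<Rightarrow> ereal) \<Rightarrow> 'a \<Rightarrow> ereal" where
  "fsum m f = (\<lambda>x. \<Sum>i\<in>{1..m}. f i x)"

definition cdom :: "nat \<Rightarrow> (nat \<Rightarrow> 'a \<Rightarrow> ereal) \<Rightarrow> 'a set" where
  "cdom m f = (\<Inter>i\<in>{1..m}. edom (f i))"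

end

theory Submission
  imports Defs
begin

text \<open>
  Everything rests on the Fenchel--Young description
  \<open>l \<in> \<partial>\<^sub>\<epsilon>g(x) \<longleftrightarrow> g\<^sup>*(l) \<le> l(x) - g(x) + \<epsilon>\<close>. The inequality
  \<open>(\<Sum>f\<^sub>i)\<^sup>* \<le> f\<^sub>1\<^sup>* \<box> \<dots> \<box> f\<^sub>m\<^sup>*\<close> always holds, and whenever the infimal convolution
  at \<open>l\<close> lies strictly below \<open>l(x) - \<Sum>f\<^sub>i(x) + c\<close>, a near-optimal decomposition \<open>l = \<Sum>l\<^sub>i\<close>
  consists of \<open>\<epsilon>\<^sub>i\<close>-subgradients of the \<open>f\<^sub>i\<close> at \<open>x\<close> with \<open>\<Sum>\<epsilon>\<^sub>i = c\<close>; conversely, such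
  sums are \<open>c\<close>-subgradients of the sum. Hence the exact conjugate formula (iv) is the
  approximate sum rule (iii), while the sum rule (i) gives (iv) by letting \<open>\<epsilon> \<rightarrow> 0\<close>.
  Properties (v), (ii) and the epigraph condition enter through the closedness, in the
  topology of pointwise convergence, of sublevel sets of conjugates and of
  \<open>\<epsilon>\<close>-subdifferentials.
\<close>

lemma sum_fun_apply: "(\<Sum>i\<in>A. (v i :: 'a \<Rightarrow> 'b::comm_monoid_add)) x = (\<Sum>i\<in>A. v i x)"
  by (induction A rule: infinite_finite_induct) auto

lemma sum_mem_if_closed_add:
  assumes add: "\<And>l1 l2. l1 \<in> L \<Longrightarrow> l2 \<in> L \<Longrightarrow> (\<lambda>x. l1 x + l2 x) \<in> L"
    and "finite A" "A \<noteq> {}" "\<forall>i\<in>A. v i \<in> L"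
  shows "(\<Sum>i\<in>A. v i) \<in> L"
  using assms(2-)
proof (induction A rule: finite_ne_induct)
  case (insert i A)
  then have "(\<lambda>y. v i y + (\<Sum>j\<in>A. v j) y) \<in> L" by (intro add) auto
  then show ?case using insert by (simp add: plus_fun_def)
qed simp

lemma sum_ereal_not_MInfty: "(\<And>i. i \<in> A \<Longrightarrow> h i \<noteq> -\<infinity>) \<Longrightarrow> sum h A \<noteq> (-\<infinity>::ereal)"
  by (induction A rule: infinite_finite_induct) auto

lemma fenchel_young: "ereal (l x) - g x \<le> fconj g l"
  unfolding fconj_def by (rule SUP_upper) simp

lemma closed_fconj_le:
  fixes h :: "('a \<Rightarrow> real) \<Rightarrow> real"
  assumes h: "continuous_on UNIV h"
  shows "closed {l. fconj g l \<le> ereal (h l)}"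
proof -
  have "closed {l. ereal (l y) - g y \<le> ereal (h l)}" for y
  proof (cases "g y")
    case (real b)
    then have "{l. ereal (l y) - g y \<le> ereal (h l)} = {l. l y - b \<le> h l}" by auto
    moreover have "closed {l. l y - b \<le> h l}"
      using h by (intro closed_Collect_le) (auto intro!: continuous_intros)
    ultimately show ?thesis by simp
  qed simp_all
  then have "closed {l. \<forall>y. ereal (l y) - g y \<le> ereal (h l)}" by (rule closed_Collect_all)
  then show ?thesis by (simp add: fconj_def SUP_le_iff)
qed

lemma lsc_on_fconj:
  assumes "\<forall>l\<in>L. g l = fconj h l"
  shows "lsc_on L g"
  unfolding lsc_on_def
proof
  fix r :: real
  have "{l \<in> L. g l \<le> ereal r} = L \<inter> {l. fconj h l \<le> ereal r}" using assms by auto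
  then show "closedin (top_of_set L) {l \<in> L. g l \<le> ereal r}"
    by (simp add: closedin_closed_Int closed_fconj_le)
qed

lemma esubdiff_iff_fconj:
  assumes "\<And>y. g y \<noteq> -\<infinity>"
  shows "l \<in> esubdiff L g \<epsilon> x \<longleftrightarrow> l \<in> L \<and> g x \<noteq> \<infinity> \<and> fconj g l \<le> ereal (l x) - g x + ereal \<epsilon>"
proof (cases "g x")
  case (real a)
  have "g y - g x - ereal (l y - l x) + ereal \<epsilon> \<ge> 0 \<longleftrightarrow> ereal (l y) - g y \<le> ereal (l x) - g x + ereal \<epsilon>" for y
    using assms[of y] by (cases "g y") (auto simp: real)
  then show ?thesis using real
    by (auto simp: esubdiff_def edom_def fconj_def SUP_le_iff)
next
  case PInf then show ?thesis by (simp add: esubdiff_def edom_def)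
next
  case MInf then show ?thesis using assms by simp
qed

lemma esubdiff_mono:
  assumes "\<And>y. g y \<noteq> -\<infinity>" "\<epsilon> \<le> \<epsilon>'"
  shows "esubdiff L g \<epsilon> x \<subseteq> esubdiff L g \<epsilon>' x"
proof
  fix l assume "l \<in> esubdiff L g \<epsilon> x"
  moreover have "ereal (l x) - g x + ereal \<epsilon> \<le> ereal (l x) - g x + ereal \<epsilon>'"
    using assms(2) by (intro add_left_mono) simp
  ultimately show "l \<in> esubdiff L g \<epsilon>' x"
    using esubdiff_iff_fconj[where g=g, OF assms(1)] by (meson order_trans)
qed

lemma esubdiff_le_epsilon:
  assumes "\<And>y. g y \<noteq> -\<infinity>" "\<And>\<eta>. \<eta> > 0 \<Longrightarrow> l \<in> esubdiff L g (\<epsilon> + \<eta>) x"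
  shows "l \<in> esubdiff L g \<epsilon> x"
proof -
  have approx: "l \<in> L \<and> g x \<noteq> \<infinity> \<and> fconj g l \<le> ereal (l x) - g x + ereal \<epsilon> + ereal \<eta>"
    if "\<eta> > 0" for \<eta>
    using assms(2)[OF that] esubdiff_iff_fconj[where g=g, OF assms(1)] by (simp add: add.assoc)
  have "fconj g l \<le> ereal (l x) - g x + ereal \<epsilon>"
    by (rule ereal_le_epsilon2) (use approx in blast)
  then show ?thesis using approx[of 1] esubdiff_iff_fconj[where g=g, OF assms(1)] by auto
qed

lemma closedin_esubdiff:
  assumes "\<And>y. g y \<noteq> -\<infinity>"
  shows "closedin (top_of_set L) (esubdiff L g \<epsilon> x)"
proof (cases "g x")
  case (real a)
  then have "esubdiff L g \<epsilon> x = L \<inter> {l. fconj g l \<le> ereal (l x - a + \<epsilon>)}"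
    by (auto simp: esubdiff_iff_fconj[where g=g, OF assms])
  moreover have "closed {l. fconj g l \<le> ereal (l x - a + \<epsilon>)}"
    by (intro closed_fconj_le) (auto intro!: continuous_intros)
  ultimately show ?thesis by (simp add: closedin_closed_Int)
next
  case PInf then show ?thesis by (simp add: esubdiff_def edom_def)
next
  case MInf then show ?thesis using assms by simp
qed

lemma lsc_on_le_on_closure:
  fixes g :: "('a \<Rightarrow> real) \<Rightarrow> ereal"
  assumes lsc: "lsc_on L g" and l: "l \<in> L" "l \<in> closure S" and "S \<subseteq> L"
    and bound: "\<And>l'. l' \<in> S \<Longrightarrow> g l' \<le> ereal (l' x + c)"
  shows "g l \<le> ereal (l x + c)"
proof (rule ccontr)
  assume "\<not> ?thesis"
  then have "ereal (l x + c) < g l" by simp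
  then obtain r where r: "ereal (l x + c) < ereal r" "ereal r < g l"
    using ereal_dense2 by blast
  define \<delta> where "\<delta> = (r - (l x + c)) / 2"
  have \<delta>: "\<delta> > 0" "l x + c + \<delta> < r" using r(1) by (simp_all add: \<delta>_def field_simps)
  have "closedin (top_of_set L) {l' \<in> L. g l' \<le> ereal (l x + c + \<delta>)}"
    using lsc unfolding lsc_on_def by blast
  then obtain C where C: "closed C" and sublevel: "{l' \<in> L. g l' \<le> ereal (l x + c + \<delta>)} = L \<inter> C"
    unfolding closedin_closed by blast
  define T where "T = - C \<inter> {l'. l' x < l x + \<delta>}"
  have "open T"
    unfolding T_def
    by (intro open_Int open_Compl C open_Collect_less continuous_on_product_coordinates continuous_on_const)
  moreover have "ereal (l x + c + \<delta>) < ereal r" using \<delta>(2) by simp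
  then have "ereal (l x + c + \<delta>) < g l" using r(2) by (rule order.strict_trans)
  then have "l \<notin> L \<inter> C" unfolding sublevel[symmetric] by (simp add: not_le)
  then have "l \<in> T" using l(1) \<delta>(1) by (simp add: T_def)
  ultimately obtain l' where l': "l' \<in> S" "l' \<in> T"
    using l(2) open_Int_closure_eq_empty by blast
  then have "l' x + c \<le> l x + c + \<delta>" by (simp add: T_def)
  then have "g l' \<le> ereal (l x + c + \<delta>)" using bound[OF l'(1)] by (meson ereal_less_eq(3) order_trans)
  then show False using l' sublevel \<open>S \<subseteq> L\<close> unfolding T_def by blast
qed

lemma closure_sublevel_if_closure_epigraph:
  fixes g :: "('a \<Rightarrow> real) \<Rightarrow> ereal"
  assumes lr: "(l, r) \<in> closure E" and E: "\<And>p. p \<in> E \<Longrightarrow> g (fst p) \<le> ereal (snd p)"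
    and "\<eta> > 0"
  shows "l \<in> closure {l'. g l' < ereal (l' x - l x + r + \<eta>)}"
  unfolding closure_iff_nhds_not_empty
proof (intro allI impI)
  fix T S assume "S \<subseteq> T" "open S" "l \<in> S"
  define W where "W = (S \<inter> {l'. l x - \<eta> / 2 < l' x}) \<times> {..< r + \<eta> / 2}"
  have "open W"
    unfolding W_def using \<open>open S\<close>
    by (intro open_Times open_Int open_lessThan open_Collect_less continuous_on_product_coordinates
        continuous_on_const)
  moreover have "(l, r) \<in> W" unfolding W_def using \<open>l \<in> S\<close> \<open>\<eta> > 0\<close> by simp
  ultimately obtain p where p: "p \<in> E" "p \<in> W" using lr open_Int_closure_eq_empty by blast
  then have "fst p \<in> S" "l x - \<eta> / 2 < fst p x" "snd p < r + \<eta> / 2"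
    by (auto simp: W_def mem_Times_iff)
  then have "snd p < fst p x - l x + r + \<eta>" by linarith
  then have "g (fst p) < ereal (fst p x - l x + r + \<eta>)" using le_less_trans[OF E[OF p(1)]] by simp
  then show "{l'. g l' < ereal (l' x - l x + r + \<eta>)} \<inter> T \<noteq> {}"
    using \<open>fst p \<in> S\<close> \<open>S \<subseteq> T\<close> by blast
qed

lemma msum_mono: "(\<And>i. i \<in> {1..m} \<Longrightarrow> A i \<subseteq> B i) \<Longrightarrow> msum m A \<subseteq> msum m B"
  unfolding msum_def by blast

lemma infconv_le_sum:
  "\<forall>i\<in>{1..m}. v i \<in> L \<Longrightarrow> infconv L m g (\<Sum>i\<in>{1..m}. v i) \<le> (\<Sum>i\<in>{1..m}. g i (v i))"
  unfolding infconv_def by (rule INF_lower) auto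

lemma infconv_le_on_msum_epi:
  assumes "p \<in> msum m (\<lambda>i. epi L (g i))"
  shows "infconv L m g (fst p) \<le> ereal (snd p)"
proof -
  obtain w where w: "\<forall>i\<in>{1..m}. w i \<in> epi L (g i)" and p: "p = (\<Sum>i\<in>{1..m}. w i)"
    using assms unfolding msum_def by blast
  have "infconv L m g (fst p) \<le> (\<Sum>i\<in>{1..m}. g i (fst (w i)))"
    unfolding p fst_sum using w by (intro infconv_le_sum) (auto simp: epi_def case_prod_beta)
  also have "\<dots> \<le> (\<Sum>i\<in>{1..m}. ereal (snd (w i)))"
    using w by (intro sum_mono) (auto simp: epi_def case_prod_beta)
  finally show ?thesis by (simp add: p snd_sum)
qed

abbreviation esubdiff_splits ::
  "('a \<Rightarrow> real) set \<Rightarrow> nat \<Rightarrow> (nat \<Rightarrow> 'a \<Rightarrow> ereal) \<Rightarrow> real \<Rightarrow> 'a \<Rightarrow> ('a \<Rightarrow> real) set" where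
  "esubdiff_splits L m f c x \<equiv> \<Union>{msum m (\<lambda>i. esubdiff L (f i) (e i) x) | e.
      (\<forall>i\<in>{1..m}. e i \<ge> 0) \<and> (\<Sum>i\<in>{1..m}. e i) = c}"

locale sum_of_functions =
  fixes L :: "('a \<Rightarrow> real) set" and f :: "nat \<Rightarrow> 'a \<Rightarrow> ereal" and m :: nat
  assumes L_add: "\<And>l1 l2. l1 \<in> L \<Longrightarrow> l2 \<in> L \<Longrightarrow> (\<lambda>x. l1 x + l2 x) \<in> L"
    and m_pos: "m \<ge> 1"
    and f_ninf: "\<And>i x. i \<in> {1..m} \<Longrightarrow> f i x \<noteq> -\<infinity>"
begin

lemma fsum_ninf: "fsum m f y \<noteq> -\<infinity>"
  unfolding fsum_def by (rule sum_ereal_not_MInfty) (use f_ninf in auto)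

lemma mem_cdom_iff: "y \<in> cdom m f \<longleftrightarrow> fsum m f y \<noteq> \<infinity>"
  unfolding cdom_def fsum_def edom_def using sum_Pinfty[of "\<lambda>i. f i y" "{1..m}"]
  by (auto simp: less_top[symmetric])

lemma f_real: "y \<in> cdom m f \<Longrightarrow> i \<in> {1..m} \<Longrightarrow> f i y = ereal (real_of_ereal (f i y))"
  unfolding cdom_def edom_def using f_ninf[of i y] by (cases "f i y") auto

lemma fsum_real: "y \<in> cdom m f \<Longrightarrow> fsum m f y = ereal (\<Sum>i\<in>{1..m}. real_of_ereal (f i y))"
  unfolding fsum_def sum_ereal[symmetric] by (rule sum.cong) (auto intro: f_real)

lemma sum_mem_L: "\<forall>i\<in>{1..m}. v i \<in> L \<Longrightarrow> (\<Sum>i\<in>{1..m}. v i) \<in> L"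
  by (rule sum_mem_if_closed_add[OF L_add]) (use m_pos in auto)

lemma esubdiff_f_iff:
  "i \<in> {1..m} \<Longrightarrow> l \<in> esubdiff L (f i) \<epsilon> x \<longleftrightarrow>
     l \<in> L \<and> f i x \<noteq> \<infinity> \<and> fconj (f i) l \<le> ereal (l x) - f i x + ereal \<epsilon>"
  by (rule esubdiff_iff_fconj) (use f_ninf in auto)

lemma esubdiff_fsum_iff:
  "l \<in> esubdiff L (fsum m f) \<epsilon> x \<longleftrightarrow>
     l \<in> L \<and> x \<in> cdom m f \<and> fconj (fsum m f) l \<le> ereal (l x) - fsum m f x + ereal \<epsilon>"
  using esubdiff_iff_fconj[where g="fsum m f", OF fsum_ninf] mem_cdom_iff by blast

lemma msum_esubdiff_subset_L: "msum m (\<lambda>i. esubdiff L (f i) (e i) x) \<subseteq> L"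
  unfolding msum_def using sum_mem_L esubdiff_f_iff by blast

lemma msum_esubdiff_mono:
  "\<forall>i\<in>{1..m}. e i \<le> \<epsilon> \<Longrightarrow>
    msum m (\<lambda>i. esubdiff L (f i) (e i) x) \<subseteq> msum m (\<lambda>i. esubdiff L (f i) \<epsilon> x)"
  by (rule msum_mono, rule esubdiff_mono) (use f_ninf in auto)

lemma cdom_if_esubdiff: "\<forall>i\<in>{1..m}. v i \<in> esubdiff L (f i) (e i) x \<Longrightarrow> x \<in> cdom m f"
  unfolding cdom_def edom_def using esubdiff_f_iff by (auto simp: less_top[symmetric])

lemma fconj_fsum_le_sum:
  "fconj (fsum m f) (\<Sum>i\<in>{1..m}. v i) \<le> (\<Sum>i\<in>{1..m}. fconj (f i) (v i))"
  unfolding fconj_def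
proof (rule SUP_least)
  fix y
  show "ereal ((\<Sum>i\<in>{1..m}. v i) y) - fsum m f y \<le> (\<Sum>i\<in>{1..m}. SUP x. ereal (v i x) - f i x)"
  proof (cases "y \<in> cdom m f")
    case True
    have "(\<Sum>i\<in>{1..m}. ereal (v i y) - f i y) = (\<Sum>i\<in>{1..m}. ereal (v i y - real_of_ereal (f i y)))"
      by (rule sum.cong) (use f_real[OF True] in \<open>auto simp: ereal_minus(1)[symmetric]\<close>)
    then have "ereal ((\<Sum>i\<in>{1..m}. v i) y) - fsum m f y = (\<Sum>i\<in>{1..m}. ereal (v i y) - f i y)"
      using fsum_real[OF True] by (simp add: sum_fun_apply sum_subtractf)
    also have "\<dots> \<le> (\<Sum>i\<in>{1..m}. SUP x. ereal (v i x) - f i x)"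
      by (intro sum_mono SUP_upper) auto
    finally show ?thesis .
  next
    case False
    then show ?thesis using mem_cdom_iff by simp
  qed
qed

lemma fconj_fsum_le_infconv: "fconj (fsum m f) l \<le> infconv L m (\<lambda>i. fconj (f i)) l"
  unfolding infconv_def by (rule INF_greatest) (use fconj_fsum_le_sum in auto)

lemma sum_fconj_le_of_esubdiff:
  assumes v: "\<forall>i\<in>{1..m}. v i \<in> esubdiff L (f i) (e i) x"
  shows "(\<Sum>i\<in>{1..m}. fconj (f i) (v i))
    \<le> ereal ((\<Sum>i\<in>{1..m}. v i) x) - fsum m f x + ereal (\<Sum>i\<in>{1..m}. e i)"
proof -
  have x: "x \<in> cdom m f" by (rule cdom_if_esubdiff[OF v])
  have "(\<Sum>i\<in>{1..m}. fconj (f i) (v i)) \<le> (\<Sum>i\<in>{1..m}. ereal (v i x - real_of_ereal (f i x) + e i))"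
  proof (rule sum_mono)
    fix i assume i: "i \<in> {1..m}"
    then have "fconj (f i) (v i) \<le> ereal (v i x) - f i x + ereal (e i)" using v esubdiff_f_iff by blast
    also have "\<dots> = ereal (v i x - real_of_ereal (f i x) + e i)"
      by (subst f_real[OF x i]) simp
    finally show "fconj (f i) (v i) \<le> ereal (v i x - real_of_ereal (f i x) + e i)" .
  qed
  also have "\<dots> = ereal ((\<Sum>i\<in>{1..m}. v i) x) - fsum m f x + ereal (\<Sum>i\<in>{1..m}. e i)"
    by (simp add: fsum_real[OF x] sum_fun_apply sum.distrib sum_subtractf)
  finally show ?thesis .
qed

lemma sum_mem_esubdiff_fsum:
  assumes v: "\<forall>i\<in>{1..m}. v i \<in> esubdiff L (f i) (e i) x"
  shows "(\<Sum>i\<in>{1..m}. v i) \<in> esubdiff L (fsum m f) (\<Sum>i\<in>{1..m}. e i) x"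
proof -
  have "(\<Sum>i\<in>{1..m}. v i) \<in> L" using v esubdiff_f_iff by (intro sum_mem_L) blast
  moreover have "fconj (fsum m f) (\<Sum>i\<in>{1..m}. v i)
      \<le> ereal ((\<Sum>i\<in>{1..m}. v i) x) - fsum m f x + ereal (\<Sum>i\<in>{1..m}. e i)"
    using fconj_fsum_le_sum sum_fconj_le_of_esubdiff[OF v] by (rule order_trans)
  ultimately show ?thesis using cdom_if_esubdiff[OF v] esubdiff_fsum_iff by blast
qed

lemma infconv_le_on_msum_esubdiff:
  assumes "l \<in> msum m (\<lambda>i. esubdiff L (f i) \<delta> x)"
  shows "infconv L m (\<lambda>i. fconj (f i)) l \<le> ereal (l x) - fsum m f x + ereal (real m * \<delta>)"
proof -
  obtain v where v: "\<forall>i\<in>{1..m}. v i \<in> esubdiff L (f i) \<delta> x" and l: "l = (\<Sum>i\<in>{1..m}. v i)"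
    using assms unfolding msum_def by blast
  have "infconv L m (\<lambda>i. fconj (f i)) l \<le> (\<Sum>i\<in>{1..m}. fconj (f i) (v i))"
    unfolding l using v esubdiff_f_iff by (intro infconv_le_sum) blast
  also have "\<dots> \<le> ereal (l x) - fsum m f x + ereal (real m * \<delta>)"
    using sum_fconj_le_of_esubdiff[of v "\<lambda>_. \<delta>"] v l by simp
  finally show ?thesis .
qed

lemma esubdiff_splits_subset_esubdiff_fsum:
  "esubdiff_splits L m f c x \<subseteq> esubdiff L (fsum m f) c x"
  unfolding msum_def using sum_mem_esubdiff_fsum by blast

lemma esubdiff_splits_subset_msum:
  "esubdiff_splits L m f c x \<subseteq> msum m (\<lambda>i. esubdiff L (f i) c x)"
proof (rule Union_least)
  fix S assume "S \<in> {msum m (\<lambda>i. esubdiff L (f i) (e i) x) | e.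
      (\<forall>i\<in>{1..m}. e i \<ge> 0) \<and> (\<Sum>i\<in>{1..m}. e i) = c}"
  then obtain e where e: "\<forall>i\<in>{1..m}. e i \<ge> 0" "(\<Sum>i\<in>{1..m}. e i) = c"
    and S: "S = msum m (\<lambda>i. esubdiff L (f i) (e i) x)" by blast
  have "\<forall>i\<in>{1..m}. e i \<le> c" using e by (auto intro: member_le_sum)
  then show "S \<subseteq> msum m (\<lambda>i. esubdiff L (f i) c x)" unfolding S by (rule msum_esubdiff_mono)
qed

lemma esubdiff_splits_if_infconv_less:
  assumes x: "x \<in> cdom m f"
    and less: "infconv L m (\<lambda>i. fconj (f i)) l < ereal (l x) - fsum m f x + ereal c"
  shows "l \<in> esubdiff_splits L m f c x"
proof -
  obtain v where vL: "\<forall>i\<in>{1..m}. v i \<in> L" and l: "l = (\<Sum>i\<in>{1..m}. v i)"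
    and vless: "(\<Sum>i\<in>{1..m}. fconj (f i) (v i)) < ereal (l x) - fsum m f x + ereal c"
    using less unfolding infconv_def INF_less_iff by auto
  define a where "a i = real_of_ereal (f i x)" for i
  have fx: "f i x = ereal (a i)" if "i \<in> {1..m}" for i
    using f_real[OF x that] by (simp add: a_def)
  have "(\<Sum>i\<in>{1..m}. fconj (f i) (v i)) \<noteq> \<infinity>" using vless by auto
  then have finite: "fconj (f i) (v i) \<noteq> \<infinity>" if "i \<in> {1..m}" for i
    using that sum_Pinfty[of "\<lambda>i. fconj (f i) (v i)" "{1..m}"] by auto
  have young: "ereal (v i x - a i) \<le> fconj (f i) (v i)" if "i \<in> {1..m}" for i
    using fenchel_young[of "v i" x "f i"] fx[OF that] by simp
  define gap where "gap i = real_of_ereal (fconj (f i) (v i)) - (v i x - a i)" for i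
  have fconj_v: "fconj (f i) (v i) = ereal (v i x - a i + gap i)" and gap_nonneg: "gap i \<ge> 0"
    if "i \<in> {1..m}" for i
    using finite[OF that] young[OF that] unfolding gap_def by (cases "fconj (f i) (v i)"; simp)+
  have "ereal (\<Sum>i\<in>{1..m}. v i x - a i + gap i) < ereal (l x - (\<Sum>i\<in>{1..m}. a i) + c)"
    using vless fsum_real[OF x] by (simp add: fconj_v a_def)
  then have gap_less: "(\<Sum>i\<in>{1..m}. gap i) < c"
    by (simp add: l sum_fun_apply sum.distrib sum_subtractf)
  define e where "e i = gap i + (c - (\<Sum>j\<in>{1..m}. gap j)) / real m" for i
  have gap_le_e: "gap i \<le> e i" for i using gap_less m_pos by (simp add: e_def)
  have e_sum: "(\<Sum>i\<in>{1..m}. e i) = c" using m_pos by (simp add: e_def sum.distrib)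
  have "v i \<in> esubdiff L (f i) (e i) x" if i: "i \<in> {1..m}" for i
    unfolding esubdiff_f_iff[OF i] using vL i fx[OF i] fconj_v[OF i] gap_le_e[of i] by simp
  then have "l \<in> msum m (\<lambda>i. esubdiff L (f i) (e i) x)" unfolding msum_def l by blast
  moreover have "\<forall>i\<in>{1..m}. e i \<ge> 0" using gap_nonneg gap_le_e by (meson order_trans)
  ultimately show ?thesis using e_sum by blast
qed

lemma Inter_closure_esubdiff_splits_subset:
  "(\<Inter>\<eta>\<in>{0<..}. L \<inter> closure (esubdiff_splits L m f (\<epsilon> + \<eta>) x)) \<subseteq> esubdiff L (fsum m f) \<epsilon> x"
proof
  fix l assume l: "l \<in> (\<Inter>\<eta>\<in>{0<..}. L \<inter> closure (esubdiff_splits L m f (\<epsilon> + \<eta>) x))"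
  show "l \<in> esubdiff L (fsum m f) \<epsilon> x"
  proof (rule esubdiff_le_epsilon[where g="fsum m f", OF fsum_ninf])
    fix \<eta> :: real assume "\<eta> > 0"
    obtain C where C: "closed C" and sub: "esubdiff L (fsum m f) (\<epsilon> + \<eta>) x = L \<inter> C"
      using closedin_esubdiff[where g="fsum m f", OF fsum_ninf] unfolding closedin_closed by blast
    then have "closure (esubdiff_splits L m f (\<epsilon> + \<eta>) x) \<subseteq> C"
      using esubdiff_splits_subset_esubdiff_fsum by (intro closure_minimal) blast+
    then show "l \<in> esubdiff L (fsum m f) (\<epsilon> + \<eta>) x" using l \<open>\<eta> > 0\<close> sub by blast
  qed
qed

lemma fconj_fsum_eq_infconv_if_sum_rule:
  assumes dom: "cdom m f \<noteq> {}" and "K \<ge> 0"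
    and rule: "\<forall>x\<in>cdom m f. \<forall>\<epsilon>>0.
      esubdiff L (fsum m f) \<epsilon> x \<subseteq> msum m (\<lambda>i. esubdiff L (f i) (K * \<epsilon>) x)"
    and "l \<in> L"
  shows "fconj (fsum m f) l = infconv L m (\<lambda>i. fconj (f i)) l"
proof (rule antisym[OF fconj_fsum_le_infconv])
  obtain x0 where "x0 \<in> cdom m f" using dom by blast
  then have "fconj (fsum m f) l \<noteq> -\<infinity>"
    using fenchel_young[of l x0 "fsum m f"] fsum_real by auto
  then show "infconv L m (\<lambda>i. fconj (f i)) l \<le> fconj (fsum m f) l"
  proof (cases "fconj (fsum m f) l")
    case (real s)
    show ?thesis
    proof (rule ereal_le_epsilon2)
      fix \<delta> :: real assume "\<delta> > 0"
      define \<epsilon> where "\<epsilon> = \<delta> / (real m * K + 1)"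
      have pos: "real m * K + 1 > 0" using \<open>K \<ge> 0\<close> by (simp add: add_nonneg_pos)
      then have "\<epsilon> > 0" unfolding \<epsilon>_def using \<open>\<delta> > 0\<close> by (intro divide_pos_pos)
      have "\<epsilon> * (real m * K + 1) = \<delta>"
        using nonzero_eq_divide_eq[of "real m * K + 1"] pos \<epsilon>_def by auto
      then have \<epsilon>\<delta>: "\<epsilon> + real m * (K * \<epsilon>) = \<delta>" by (simp add: algebra_simps)
      have "ereal (s - \<epsilon>) < fconj (fsum m f) l" using real \<open>\<epsilon> > 0\<close> by simp
      then obtain y where y: "ereal (s - \<epsilon>) < ereal (l y) - fsum m f y"
        unfolding fconj_def less_SUP_iff by blast
      then have "fsum m f y \<noteq> \<infinity>" by auto
      then have "y \<in> cdom m f" using mem_cdom_iff by blast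
      then obtain A where A: "fsum m f y = ereal A" using fsum_real by blast
      have "l \<in> esubdiff L (fsum m f) \<epsilon> y"
        using y real A \<open>l \<in> L\<close> \<open>y \<in> cdom m f\<close> by (simp add: esubdiff_fsum_iff)
      then have "l \<in> msum m (\<lambda>i. esubdiff L (f i) (K * \<epsilon>) y)"
        using rule \<open>y \<in> cdom m f\<close> \<open>\<epsilon> > 0\<close> by blast
      then have "infconv L m (\<lambda>i. fconj (f i)) l \<le> ereal (l y) - fsum m f y + ereal (real m * (K * \<epsilon>))"
        by (rule infconv_le_on_msum_esubdiff)
      also have "\<dots> \<le> fconj (fsum m f) l + ereal \<delta>"
        using fenchel_young[of l y "fsum m f"] real A \<epsilon>\<delta> \<open>\<epsilon> > 0\<close> by simp
      finally show "infconv L m (\<lambda>i. fconj (f i)) l \<le> fconj (fsum m f) l + ereal \<delta>" .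
    qed
  qed simp_all
qed

lemma esubdiff_fsum_eq_Inter_splits:
  assumes conj: "\<forall>l\<in>L. fconj (fsum m f) l = infconv L m (\<lambda>i. fconj (f i)) l"
  shows "esubdiff L (fsum m f) \<epsilon> x = (\<Inter>\<eta>\<in>{0<..}. esubdiff_splits L m f (\<epsilon> + \<eta>) x)"
proof
  show "esubdiff L (fsum m f) \<epsilon> x \<subseteq> (\<Inter>\<eta>\<in>{0<..}. esubdiff_splits L m f (\<epsilon> + \<eta>) x)"
  proof (intro subsetI INT_I)
    fix l and \<eta> :: real assume l: "l \<in> esubdiff L (fsum m f) \<epsilon> x" and "\<eta> \<in> {0<..}"
    then have x: "x \<in> cdom m f" and "l \<in> L"
      and le: "fconj (fsum m f) l \<le> ereal (l x) - fsum m f x + ereal \<epsilon>"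
      by (auto simp: esubdiff_fsum_iff)
    obtain A where A: "fsum m f x = ereal A" using fsum_real[OF x] by blast
    have "infconv L m (\<lambda>i. fconj (f i)) l \<le> ereal (l x - A + \<epsilon>)"
      using le conj \<open>l \<in> L\<close> A by simp
    also have "\<dots> < ereal (l x) - fsum m f x + ereal (\<epsilon> + \<eta>)"
      using \<open>\<eta> \<in> {0<..}\<close> A by simp
    finally show "l \<in> esubdiff_splits L m f (\<epsilon> + \<eta>) x"
      by (rule esubdiff_splits_if_infconv_less[OF x])
  qed
  have "esubdiff L (fsum m f) c x \<subseteq> L" for c using esubdiff_fsum_iff by blast
  then have "esubdiff_splits L m f c x \<subseteq> L \<inter> closure (esubdiff_splits L m f c x)" for c
    using esubdiff_splits_subset_esubdiff_fsum closure_subset by (meson Int_greatest order_trans)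
  then have "(\<Inter>\<eta>\<in>{0<..}. esubdiff_splits L m f (\<epsilon> + \<eta>) x)
      \<subseteq> (\<Inter>\<eta>\<in>{0<..}. L \<inter> closure (esubdiff_splits L m f (\<epsilon> + \<eta>) x))"
    by (rule INF_mono')
  then show "(\<Inter>\<eta>\<in>{0<..}. esubdiff_splits L m f (\<epsilon> + \<eta>) x) \<subseteq> esubdiff L (fsum m f) \<epsilon> x"
    using Inter_closure_esubdiff_splits_subset by (rule order_trans)
qed

lemma esubdiff_fsum_subset_msum_if_Inter_splits:
  assumes "esubdiff L (fsum m f) \<epsilon> x \<subseteq> (\<Inter>\<eta>\<in>{0<..}. esubdiff_splits L m f (\<epsilon> + \<eta>) x)"
    and "\<epsilon> > 0"
  shows "esubdiff L (fsum m f) \<epsilon> x \<subseteq> msum m (\<lambda>i. esubdiff L (f i) (2 * \<epsilon>) x)"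
proof -
  have "\<epsilon> \<in> {0<..}" using \<open>\<epsilon> > 0\<close> by simp
  then have "(\<Inter>\<eta>\<in>{0<..}. esubdiff_splits L m f (\<epsilon> + \<eta>) x) \<subseteq> esubdiff_splits L m f (\<epsilon> + \<epsilon>) x"
    by (rule INT_lower)
  then show ?thesis
    unfolding mult_2 using assms(1) esubdiff_splits_subset_msum by (meson order_trans)
qed

lemma closure_msum_esubdiff_subset_if_lsc:
  assumes lsc: "lsc_on L (infconv L m (\<lambda>i. fconj (f i)))" and x: "x \<in> cdom m f" and "\<epsilon> > 0"
  shows "L \<inter> closure (msum m (\<lambda>i. esubdiff L (f i) \<epsilon> x))
    \<subseteq> msum m (\<lambda>i. esubdiff L (f i) ((real m + 1) * \<epsilon>) x)"
proof
  fix l assume l: "l \<in> L \<inter> closure (msum m (\<lambda>i. esubdiff L (f i) \<epsilon> x))"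
  obtain A where A: "fsum m f x = ereal A" using fsum_real[OF x] by blast
  have "infconv L m (\<lambda>i. fconj (f i)) l \<le> ereal (l x + (real m * \<epsilon> - A))"
  proof (rule lsc_on_le_on_closure[OF lsc])
    fix l' assume "l' \<in> msum m (\<lambda>i. esubdiff L (f i) \<epsilon> x)"
    then have "infconv L m (\<lambda>i. fconj (f i)) l' \<le> ereal (l' x) - fsum m f x + ereal (real m * \<epsilon>)"
      by (rule infconv_le_on_msum_esubdiff)
    then show "infconv L m (\<lambda>i. fconj (f i)) l' \<le> ereal (l' x + (real m * \<epsilon> - A))"
      using A by (simp add: algebra_simps)
  qed (use l msum_esubdiff_subset_L[of "\<lambda>_. \<epsilon>" x] in auto)
  also have "\<dots> < ereal (l x) - fsum m f x + ereal ((real m + 1) * \<epsilon>)"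
    using A \<open>\<epsilon> > 0\<close> by (simp add: algebra_simps)
  finally have "l \<in> esubdiff_splits L m f ((real m + 1) * \<epsilon>) x"
    by (rule esubdiff_splits_if_infconv_less[OF x])
  then show "l \<in> msum m (\<lambda>i. esubdiff L (f i) ((real m + 1) * \<epsilon>) x)"
    by (rule subsetD[OF esubdiff_splits_subset_msum])
qed

lemma esubdiff_fsum_subset_msum_if_Inter_closure_splits:
  assumes H: "esubdiff L (fsum m f) \<epsilon> x
      \<subseteq> (\<Inter>\<eta>\<in>{0<..}. L \<inter> closure (esubdiff_splits L m f (\<epsilon> + \<eta>) x))"
    and closure_rule: "L \<inter> closure (msum m (\<lambda>i. esubdiff L (f i) (2 * \<epsilon>) x))
      \<subseteq> msum m (\<lambda>i. esubdiff L (f i) (K * (2 * \<epsilon>)) x)"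
    and "\<epsilon> > 0" and "2 * K \<le> K'"
  shows "esubdiff L (fsum m f) \<epsilon> x \<subseteq> msum m (\<lambda>i. esubdiff L (f i) (K' * \<epsilon>) x)"
proof -
  have "\<epsilon> \<in> {0<..}" using \<open>\<epsilon> > 0\<close> by simp
  then have "(\<Inter>\<eta>\<in>{0<..}. L \<inter> closure (esubdiff_splits L m f (\<epsilon> + \<eta>) x))
      \<subseteq> L \<inter> closure (esubdiff_splits L m f (2 * \<epsilon>) x)"
    unfolding mult_2 by (rule INT_lower)
  also have "\<dots> \<subseteq> L \<inter> closure (msum m (\<lambda>i. esubdiff L (f i) (2 * \<epsilon>) x))"
    by (intro Int_mono order_refl closure_mono esubdiff_splits_subset_msum)
  also have "\<dots> \<subseteq> msum m (\<lambda>i. esubdiff L (f i) (K * (2 * \<epsilon>)) x)"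
    by (rule closure_rule)
  also have "\<dots> \<subseteq> msum m (\<lambda>i. esubdiff L (f i) (K' * \<epsilon>) x)"
    using mult_right_mono[OF \<open>2 * K \<le> K'\<close>, of \<epsilon>] \<open>\<epsilon> > 0\<close>
    by (intro msum_esubdiff_mono) (simp add: mult.assoc mult.left_commute)
  finally show ?thesis by (rule order_trans[OF H])
qed

lemma esubdiff_fsum_eq_Inter_closure_splits:
  assumes epi: "epi L (fconj (fsum m f)) \<subseteq> closure (msum m (\<lambda>i. epi L (fconj (f i))))"
    and x: "x \<in> cdom m f"
  shows "esubdiff L (fsum m f) \<epsilon> x = (\<Inter>\<eta>\<in>{0<..}. L \<inter> closure (esubdiff_splits L m f (\<epsilon> + \<eta>) x))"
proof
  show "esubdiff L (fsum m f) \<epsilon> x \<subseteq> (\<Inter>\<eta>\<in>{0<..}. L \<inter> closure (esubdiff_splits L m f (\<epsilon> + \<eta>) x))"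
  proof (intro subsetI INT_I IntI)
    fix l and \<eta> :: real assume l: "l \<in> esubdiff L (fsum m f) \<epsilon> x" and "\<eta> \<in> {0<..}"
    then show "l \<in> L" by (simp add: esubdiff_fsum_iff)
    obtain A where A: "fsum m f x = ereal A" using fsum_real[OF x] by blast
    define r where "r = l x - A + \<epsilon>"
    have "(l, r) \<in> epi L (fconj (fsum m f))" using l A by (simp add: esubdiff_fsum_iff epi_def r_def)
    then have "l \<in> closure {l'. infconv L m (\<lambda>i. fconj (f i)) l' < ereal (l' x - l x + r + \<eta>)}"
      using epi infconv_le_on_msum_epi \<open>\<eta> \<in> {0<..}\<close>
      by (intro closure_sublevel_if_closure_epigraph) auto
    moreover have "{l'. infconv L m (\<lambda>i. fconj (f i)) l' < ereal (l' x - l x + r + \<eta>)}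
        \<subseteq> esubdiff_splits L m f (\<epsilon> + \<eta>) x"
    proof
      fix l' assume "l' \<in> {l'. infconv L m (\<lambda>i. fconj (f i)) l' < ereal (l' x - l x + r + \<eta>)}"
      then have "infconv L m (\<lambda>i. fconj (f i)) l' < ereal (l' x) - fsum m f x + ereal (\<epsilon> + \<eta>)"
        using A by (simp add: r_def algebra_simps)
      then show "l' \<in> esubdiff_splits L m f (\<epsilon> + \<eta>) x"
        by (rule esubdiff_splits_if_infconv_less[OF x])
    qed
    ultimately show "l \<in> closure (esubdiff_splits L m f (\<epsilon> + \<eta>) x)"
      by (meson closure_mono subsetD)
  qed
qed (rule Inter_closure_esubdiff_splits_subset)

end

theorem mainTheorem11:
  fixes L :: "('a \<Rightarrow> real) set" and f :: "nat \<Rightarrow> 'a \<Rightarrow> ereal" and m :: nat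
  assumes L_add: "\<And>l1 l2. l1 \<in> L \<Longrightarrow> l2 \<in> L \<Longrightarrow> (\<lambda>x. l1 x + l2 x) \<in> L"
    and L_scale: "\<And>c l. l \<in> L \<Longrightarrow> (\<lambda>x. c * l x) \<in> L"
    and m2: "m \<ge> 2"
    and f_ninf: "\<And>i x. i \<in> {1..m} \<Longrightarrow> f i x \<noteq> -\<infinity>"
    and dom_ne: "(\<Inter>i\<in>{1..m}. edom (f i)) \<noteq> {}"
  defines "P1 \<equiv> (\<exists>K>1. \<forall>x\<in>cdom m f. \<forall>\<epsilon>>0.
              esubdiff L (fsum m f) \<epsilon> x \<subseteq> msum m (\<lambda>i. esubdiff L (f i) (K * \<epsilon>) x))"
    and "P2 \<equiv> (\<exists>K>0. \<forall>x\<in>cdom m f. \<forall>\<epsilon>>0.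
              L \<inter> closure (msum m (\<lambda>i. esubdiff L (f i) \<epsilon> x))
                \<subseteq> msum m (\<lambda>i. esubdiff L (f i) (K * \<epsilon>) x))"
    and "P3 \<equiv> (\<forall>x. \<forall>\<epsilon>\<ge>0. esubdiff L (fsum m f) \<epsilon> x =
              (\<Inter>\<eta>\<in>{0<..}. \<Union>{msum m (\<lambda>i. esubdiff L (f i) (e i) x) | e.
                  (\<forall>i\<in>{1..m}. e i \<ge> 0) \<and> (\<Sum>i\<in>{1..m}. e i) = \<epsilon> + \<eta>}))"
    and "P4 \<equiv> (\<forall>l\<in>L. fconj (fsum m f) l = infconv L m (\<lambda>i. fconj (f i)) l)"
    and "P5 \<equiv> lsc_on L (infconv L m (\<lambda>i. fconj (f i)))"
    and "H \<equiv> (\<forall>x\<in>cdom m f. \<forall>\<epsilon>\<ge>0. esubdiff L (fsum m f) \<epsilon> x =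
              (\<Inter>\<eta>\<in>{0<..}. L \<inter> closure (\<Union>{msum m (\<lambda>i. esubdiff L (f i) (e i) x) | e.
                  (\<forall>i\<in>{1..m}. e i \<ge> 0) \<and> (\<Sum>i\<in>{1..m}. e i) = \<epsilon> + \<eta>})))"
  shows "(P1 \<longleftrightarrow> P3) \<and> (P3 \<longleftrightarrow> P4) \<and> (P4 \<longrightarrow> P5) \<and> (P5 \<longrightarrow> P2)
         \<and> (H \<longrightarrow> (P2 \<longrightarrow> P1))
         \<and> ((L \<times> UNIV) \<inter> closure (msum m (\<lambda>i. epi L (fconj (f i)))) = epi L (fconj (fsum m f)) \<longrightarrow> H)"
proof -
  interpret sum_of_functions L f m
    using L_add f_ninf m2 by unfold_locales auto
  have dom: "cdom m f \<noteq> {}" using dom_ne by (simp add: cdom_def)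
  have P4 if P1
  proof -
    obtain K where "K > 1" and rule: "\<forall>x\<in>cdom m f. \<forall>\<epsilon>>0.
        esubdiff L (fsum m f) \<epsilon> x \<subseteq> msum m (\<lambda>i. esubdiff L (f i) (K * \<epsilon>) x)"
      using \<open>P1\<close> unfolding P1_def by blast
    then show P4 unfolding P4_def using fconj_fsum_eq_infconv_if_sum_rule[OF dom _ rule] by simp
  qed
  moreover have P3 if P4
    unfolding P3_def using esubdiff_fsum_eq_Inter_splits[OF that[unfolded P4_def]] by blast
  moreover have P1 if P3
    unfolding P1_def
  proof (intro exI[of _ 2] conjI ballI allI impI)
    fix x and \<epsilon> :: real assume "\<epsilon> > 0"
    then show "esubdiff L (fsum m f) \<epsilon> x \<subseteq> msum m (\<lambda>i. esubdiff L (f i) (2 * \<epsilon>) x)"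
      by (intro esubdiff_fsum_subset_msum_if_Inter_splits equalityD1)
        (use \<open>P3\<close> in \<open>simp_all add: P3_def\<close>)
  qed simp
  moreover have P5 if P4
    unfolding P5_def by (rule lsc_on_fconj[where h = "fsum m f"]) (simp add: that[unfolded P4_def])
  moreover have P2 if P5
    unfolding P2_def
  proof (intro exI[of _ "real m + 1"] conjI ballI allI impI)
    fix x and \<epsilon> :: real assume "x \<in> cdom m f" "\<epsilon> > 0"
    then show "L \<inter> closure (msum m (\<lambda>i. esubdiff L (f i) \<epsilon> x))
        \<subseteq> msum m (\<lambda>i. esubdiff L (f i) ((real m + 1) * \<epsilon>) x)"
      by (rule closure_msum_esubdiff_subset_if_lsc[OF that[unfolded P5_def]])
  qed simp
  moreover have P1 if H P2
  proof -
    obtain K where "K > 0" and rule: "\<forall>x\<in>cdom m f. \<forall>\<epsilon>>0.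
        L \<inter> closure (msum m (\<lambda>i. esubdiff L (f i) \<epsilon> x))
          \<subseteq> msum m (\<lambda>i. esubdiff L (f i) (K * \<epsilon>) x)"
      using \<open>P2\<close> unfolding P2_def by blast
    show P1 unfolding P1_def
    proof (intro exI[of _ "2 * K + 1"] conjI ballI allI impI)
      fix x and \<epsilon> :: real assume x: "x \<in> cdom m f" and \<epsilon>: "\<epsilon> > 0"
      show "esubdiff L (fsum m f) \<epsilon> x \<subseteq> msum m (\<lambda>i. esubdiff L (f i) ((2 * K + 1) * \<epsilon>) x)"
        by (rule esubdiff_fsum_subset_msum_if_Inter_closure_splits[where K = K, OF equalityD1])
          (use \<open>H\<close> rule x \<epsilon> in \<open>simp_all add: H_def\<close>)
    qed (use \<open>K > 0\<close> in simp)
  qed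
  moreover have H if "(L \<times> UNIV) \<inter> closure (msum m (\<lambda>i. epi L (fconj (f i)))) = epi L (fconj (fsum m f))"
  proof -
    have "epi L (fconj (fsum m f)) \<subseteq> closure (msum m (\<lambda>i. epi L (fconj (f i))))"
      using that by blast
    then show H unfolding H_def by (simp add: esubdiff_fsum_eq_Inter_closure_splits)
  qed
  ultimately show ?thesis by blast
qed

end
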